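(* If $X$ is a closed convex subset of $\mathbb{R}^n$, then $\mathit{HM}_1(X)=0$.
   Context: $X$ carries the Euclidean (subspace) metric. For a metric space $X$, the magnitude homology $\mathit{HM}^\ell_k(X)$ is the degree-$k$ homology of the chain complex whose $k$-chains in grading $\ell$ are the free abelian group on symbols $\langle x_0,\dots,x_k\rangle$ with $x_i\neq x_{i+1}$ and $d(x_0,x_1)+\cdots+d(x_{k-1},x_k)=\ell$, with boundary $\sum_i(-1)^i d^i$, where $d^i$ deletes $x_i$ if $d(x_{i-1},x_i)+d(x_i,x_{i+1})=d(x_{i-1},x_{i+1})$ and is $0$ otherwise (deleting an endpoint always gives $0$); $\mathit{HM}_1(X)=0$ means $\mathit{HM}^\ell_1(X)=0$ for all $\ell$. *)

theory Defs
  imports "HOL-Analysis.Analysis"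
begin

text \<open>Magnitude homology of a metric space (here: a subset X of a metric space,
with the subspace metric).\<close>

definition mag_gen :: "'a::metric_space set \<Rightarrow> nat \<Rightarrow> real \<Rightarrow> 'a list \<Rightarrow> bool" where
  "mag_gen X k l xs \<longleftrightarrow> length xs = k + 1 \<and> set xs \<subseteq> X \<and>
     (\<forall>i<k. xs ! i \<noteq> xs ! Suc i) \<and> (\<Sum>i<k. dist (xs ! i) (xs ! Suc i)) = l"

definition mag_chain :: "'a::metric_space set \<Rightarrow> nat \<Rightarrow> real \<Rightarrow> ('a list \<Rightarrow> int) \<Rightarrow> bool" where
  "mag_chain X k l c \<longleftrightarrow> finite {xs. c xs \<noteq> 0} \<and> (\<forall>xs. c xs \<noteq> 0 \<longrightarrow> mag_gen X k l xs)"

definition face :: "nat \<Rightarrow> 'a list \<Rightarrow> 'a list" where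
  "face i xs = take i xs @ drop (Suc i) xs"

definition bdry_coeff :: "'a::metric_space list \<Rightarrow> 'a list \<Rightarrow> int" where
  "bdry_coeff xs ys = (\<Sum>i\<in>{i. 0 < i \<and> i + 1 < length xs \<and>
       dist (xs ! (i - 1)) (xs ! i) + dist (xs ! i) (xs ! (i + 1)) = dist (xs ! (i - 1)) (xs ! (i + 1)) \<and>
       face i xs = ys}. (-1) ^ i)"

definition mag_boundary :: "('a::metric_space list \<Rightarrow> int) \<Rightarrow> 'a list \<Rightarrow> int" where
  "mag_boundary c ys = (\<Sum>xs\<in>{xs. c xs \<noteq> 0}. c xs * bdry_coeff xs ys)"

definition HM_vanishes :: "'a::metric_space set \<Rightarrow> nat \<Rightarrow> real \<Rightarrow> bool" where
  "HM_vanishes X k l \<longleftrightarrow> (\<forall>c. mag_chain X k l c \<and> mag_boundary c = (\<lambda>_. 0) \<longrightarrow>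
      (\<exists>b. mag_chain X (Suc k) l b \<and> mag_boundary b = c))"

end

theory Submission
  imports Defs
begin

text \<open>A generator \<open>\<langle>p, q\<rangle>\<close> is, up to sign, the boundary of \<open>\<langle>p, m, q\<rangle>\<close> for any point \<open>m \<noteq> p, q\<close>
of X lying metrically between p and q. Such points exist as soon as X is Menger convex,
e.g. when X is convex (take the midpoint), so subdividing every edge of a 1-chain at such
a point yields a 2-chain whose boundary is the negated 1-chain. Hence every 1-chain,
cycle or not, is a boundary.\<close>

definition menger_convex :: "'a::metric_space set \<Rightarrow> bool" where
  "menger_convex X \<longleftrightarrow>
     (\<forall>p\<in>X. \<forall>q\<in>X. p \<noteq> q \<longrightarrow> (\<exists>m\<in>X. m \<noteq> p \<and> m \<noteq> q \<and> dist p m + dist m q = dist p q))"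

lemma convex_imp_menger_convex:
  fixes X :: "'a::real_normed_vector set"
  assumes "convex X"
  shows "menger_convex X"
  unfolding menger_convex_def
proof (intro ballI impI)
  fix p q assume "p \<in> X" "q \<in> X" "p \<noteq> q"
  then have "closed_segment p q \<subseteq> X"
    using assms by (simp add: convex_contains_segment)
  then have "midpoint p q \<in> X"
    using midpoint_in_closed_segment by blast
  moreover have "dist p (midpoint p q) + dist (midpoint p q) q = dist p q"
    by (simp add: dist_midpoint)
  ultimately show "\<exists>m\<in>X. m \<noteq> p \<and> m \<noteq> q \<and> dist p m + dist m q = dist p q"
    using \<open>p \<noteq> q\<close> by (intro bexI[of _ "midpoint p q"]) auto
qed

lemma bdry_coeff_three:
  "bdry_coeff [a, m, b] ys = (if dist a m + dist m b = dist a b \<and> ys = [a, b] then -1 else 0)"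
proof -
  let ?xs = "[a, m, b]"
  have inner: "0 < i \<and> i + 1 < length ?xs \<longleftrightarrow> i = 1" for i :: nat
    by auto
  have "{i. 0 < i \<and> i + 1 < length ?xs \<and>
       dist (?xs ! (i - 1)) (?xs ! i) + dist (?xs ! i) (?xs ! (i + 1)) = dist (?xs ! (i - 1)) (?xs ! (i + 1)) \<and>
       face i ?xs = ys}
    = (if dist a m + dist m b = dist a b \<and> ys = [a, b] then {1} else {})"
    unfolding inner conj_assoc[symmetric] by (auto simp: face_def)
  then show ?thesis
    unfolding bdry_coeff_def by simp
qed

lemma mag_gen_one_iff:
  "mag_gen X 1 l xs \<longleftrightarrow> (\<exists>p q. xs = [p, q] \<and> p \<in> X \<and> q \<in> X \<and> p \<noteq> q \<and> dist p q = l)"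
proof
  assume gen: "mag_gen X 1 l xs"
  then obtain p q where "xs = [p, q]"
    by (auto simp: mag_gen_def numeral_2_eq_2 length_Suc_conv)
  with gen show "\<exists>p q. xs = [p, q] \<and> p \<in> X \<and> q \<in> X \<and> p \<noteq> q \<and> dist p q = l"
    by (auto simp: mag_gen_def)
qed (auto simp: mag_gen_def)

lemma mag_gen_two_between:
  assumes "p \<in> X" "m \<in> X" "q \<in> X" "m \<noteq> p" "m \<noteq> q" "dist p m + dist m q = dist p q"
  shows "mag_gen X 2 (dist p q) [p, m, q]"
  using assms by (auto simp: mag_gen_def numeral_2_eq_2 less_Suc_eq dist_commute)

text \<open>The minus sign cancels the sign \<open>(-1)^1\<close> of deleting the middle point.\<close>

definition subdivision :: "('a \<Rightarrow> 'a \<Rightarrow> 'a) \<Rightarrow> ('a list \<Rightarrow> int) \<Rightarrow> 'a list \<Rightarrow> int" where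
  "subdivision mid c zs =
     (if length zs = 3 \<and> zs ! 1 = mid (zs ! 0) (zs ! 2) then - c [zs ! 0, zs ! 2] else 0)"

locale betweenness_choice =
  fixes X :: "'a::metric_space set" and mid :: "'a \<Rightarrow> 'a \<Rightarrow> 'a"
  assumes mid_between: "\<And>p q. p \<in> X \<Longrightarrow> q \<in> X \<Longrightarrow> p \<noteq> q \<Longrightarrow>
    mid p q \<in> X \<and> mid p q \<noteq> p \<and> mid p q \<noteq> q \<and> dist p (mid p q) + dist (mid p q) q = dist p q"
begin

definition split_edge :: "'a list \<Rightarrow> 'a list" where
  "split_edge xs = [xs ! 0, mid (xs ! 0) (xs ! 1), xs ! 1]"

context
  fixes l and c :: "'a list \<Rightarrow> int"
  assumes chain: "mag_chain X 1 l c"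
begin

lemma support_is_edges:
  assumes "c xs \<noteq> 0"
  obtains p q where "xs = [p, q]" "p \<in> X" "q \<in> X" "p \<noteq> q" "dist p q = l"
proof -
  from chain assms have "mag_gen X 1 l xs"
    unfolding mag_chain_def by blast
  with that show thesis
    unfolding mag_gen_one_iff by blast
qed

lemma support_subdivision:
  "{zs. subdivision mid c zs \<noteq> 0} = split_edge ` {xs. c xs \<noteq> 0}"
proof safe
  fix zs assume "subdivision mid c zs \<noteq> 0"
  then have "length zs = 3" and m: "zs ! 1 = mid (zs ! 0) (zs ! 2)" and nz: "c [zs ! 0, zs ! 2] \<noteq> 0"
    by (auto simp: subdivision_def split: if_splits)
  from \<open>length zs = 3\<close> obtain p m' q where "zs = [p, m', q]"
    by (auto simp: numeral_3_eq_3 length_Suc_conv)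
  with m nz have "zs = split_edge [p, q]" and "[p, q] \<in> {xs. c xs \<noteq> 0}"
    by (simp_all add: split_edge_def)
  then show "zs \<in> split_edge ` {xs. c xs \<noteq> 0}"
    by blast
next
  fix xs assume nz: "c xs \<noteq> 0" and "subdivision mid c (split_edge xs) = 0"
  moreover obtain p q where "xs = [p, q]"
    using nz by (rule support_is_edges)
  ultimately show False
    by (simp add: subdivision_def split_edge_def)
qed

lemma mag_chain_subdivision: "mag_chain X 2 l (subdivision mid c)"
  unfolding mag_chain_def
proof (intro conjI allI impI)
  show "finite {zs. subdivision mid c zs \<noteq> 0}"
    using chain by (simp add: mag_chain_def support_subdivision)
  fix zs assume "subdivision mid c zs \<noteq> 0"
  then have "zs \<in> split_edge ` {xs. c xs \<noteq> 0}"
    using support_subdivision by blast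
  then obtain xs where "c xs \<noteq> 0" and zs: "zs = split_edge xs"
    by blast
  from \<open>c xs \<noteq> 0\<close> obtain p q where "xs = [p, q]" "p \<in> X" "q \<in> X" "p \<noteq> q" "dist p q = l"
    by (rule support_is_edges)
  with zs show "mag_gen X 2 l zs"
    using mid_between[of p q] mag_gen_two_between[of p X "mid p q" q]
    by (auto simp: split_edge_def)
qed

lemma mag_boundary_subdivision: "mag_boundary (subdivision mid c) = c"
proof
  fix ys
  let ?S = "{xs. c xs \<noteq> 0}"
  have inj: "inj_on split_edge ?S"
  proof (rule inj_onI)
    fix xs xs' assume "xs \<in> ?S" "xs' \<in> ?S" and eq: "split_edge xs = split_edge xs'"
    then have "c xs \<noteq> 0" "c xs' \<noteq> 0"
      by simp_all
    obtain p q where "xs = [p, q]"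
      using \<open>c xs \<noteq> 0\<close> by (rule support_is_edges)
    moreover obtain p' q' where "xs' = [p', q']"
      using \<open>c xs' \<noteq> 0\<close> by (rule support_is_edges)
    ultimately show "xs = xs'"
      using eq by (simp add: split_edge_def)
  qed
  have edge: "subdivision mid c (split_edge xs) * bdry_coeff (split_edge xs) ys
      = (if ys = xs then c xs else 0)" if "c xs \<noteq> 0" for xs
  proof -
    from that obtain p q where "xs = [p, q]" "p \<in> X" "q \<in> X" "p \<noteq> q"
      by (rule support_is_edges)
    then show ?thesis
      using mid_between[of p q]
      by (auto simp: split_edge_def subdivision_def bdry_coeff_three)
  qed
  have "mag_boundary (subdivision mid c) ys
      = (\<Sum>xs\<in>?S. subdivision mid c (split_edge xs) * bdry_coeff (split_edge xs) ys)"
    unfolding mag_boundary_def support_subdivision using sum.reindex[OF inj] by (simp add: comp_def)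
  also have "\<dots> = (\<Sum>xs\<in>?S. if ys = xs then c xs else 0)"
    using edge by (intro sum.cong) simp_all
  also have "\<dots> = c ys"
    using chain by (simp add: mag_chain_def)
  finally show "mag_boundary (subdivision mid c) ys = c ys" .
qed

end

end

lemma menger_convex_imp_betweenness_choice:
  assumes "menger_convex X"
  obtains mid where "betweenness_choice X mid"
proof -
  have "\<forall>p q. \<exists>m. p \<in> X \<longrightarrow> q \<in> X \<longrightarrow> p \<noteq> q \<longrightarrow>
      m \<in> X \<and> m \<noteq> p \<and> m \<noteq> q \<and> dist p m + dist m q = dist p q"
    using assms by (auto simp: menger_convex_def)
  then obtain mid where "\<forall>p q. p \<in> X \<longrightarrow> q \<in> X \<longrightarrow> p \<noteq> q \<longrightarrow>
      mid p q \<in> X \<and> mid p q \<noteq> p \<and> mid p q \<noteq> q \<and> dist p (mid p q) + dist (mid p q) q = dist p q"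
    by metis
  then show thesis
    by (intro that) (unfold_locales, blast)
qed

lemma menger_convex_HM1_vanishes:
  assumes "menger_convex X"
  shows "HM_vanishes X 1 l"
  unfolding HM_vanishes_def
proof (intro allI impI)
  fix c assume "mag_chain X 1 l c \<and> mag_boundary c = (\<lambda>_. 0)"
  then have chain: "mag_chain X 1 l c" ..
  obtain mid where choice: "betweenness_choice X mid"
    using menger_convex_imp_betweenness_choice assms by blast
  show "\<exists>b. mag_chain X (Suc 1) l b \<and> mag_boundary b = c"
  proof (intro exI conjI)
    show "mag_chain X (Suc 1) l (subdivision mid c)"
      using betweenness_choice.mag_chain_subdivision[OF choice chain] by (simp add: numeral_2_eq_2)
    show "mag_boundary (subdivision mid c) = c"
      using betweenness_choice.mag_boundary_subdivision[OF choice chain] .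
  qed
qed

theorem corollary7p10:
  fixes X :: "(real ^ 'n) set"
  assumes "closed X" and "convex X"
  shows "\<forall>l. HM_vanishes X 1 l"
  using menger_convex_HM1_vanishes convex_imp_menger_convex[OF \<open>convex X\<close>] by blast

end
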